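(* Let $n\ge3$ and let $x^\Lambda\partial_k,x^\Theta\partial_u\in\mathcal{B}$ with $[x^\Lambda\partial_k,x^\Theta\partial_u]\ne0$. Then for every integer $i\ge-1$, \[\mathrm{lev}_i([x^\Lambda\partial_k,x^\Theta\partial_u])=\mathrm{lev}_i(x^\Lambda\partial_k)+\mathrm{lev}_i(x^\Theta\partial_u)-h_i(n-1)\] and \[\mathrm{WD}([x^\Lambda\partial_k,x^\Theta\partial_u])=\mathrm{WD}(x^\Lambda\partial_k)+\mathrm{WD}(x^\Theta\partial_u)-(n-1).\] Moreover, if $\mathrm{lev}_i(x^\Lambda\partial_k)\le i$ and $\mathrm{lev}_j(x^\Theta\partial_u)\le j$ for some $i,j\ge-1$, then \[\mathrm{WD}([x^\Lambda\partial_k,x^\Theta\partial_u])\le\min\bigl(\mathrm{WD}(x^\Lambda\partial_k),\mathrm{WD}(x^\Theta\partial_u)\bigr),\] with equality if and only if one of $x^\Lambda\partial_k$, $x^\Theta\partial_u$ equals $\partial_1$.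
   Context: Fix an integer $n\ge 3$. A partition is a sequence $\Lambda=(\lambda_j)_{j\ge1}$ of non-negative integers with finite support; $\mathrm{wt}(\Lambda)=\sum_j j\lambda_j$; $\mathrm{Part}(k)$ is the set of partitions with $\lambda_j=0$ for $j>k$. Write $x^\Lambda=\prod_j x_j^{\lambda_j}$, $\deg(x^\Lambda)=\sum_j\lambda_j$, and let $\partial_k$ be the partial derivative with respect to $x_k$. $\mathfrak{L}(n)$ is the free $\mathbb{Z}$-module with basis $\mathcal{B}=\{x^\Lambda\partial_k : 1\le k\le n,\ \Lambda\in\mathrm{Part}(k-1)\}$, a Lie ring with bracket defined on basis elements by $[x^\Lambda\partial_k,x^\Theta\partial_j]=\partial_j(x^\Lambda)x^\Theta\partial_k$ if $j<k$, $-x^\Lambda\partial_k(x^\Theta)\partial_j$ if $j>k$, $0$ if $j=k$, extended bilinearly; thus a nonzero bracket of two basis elements is $c\cdot x^\Gamma\partial_v$ for a nonzero integer $c$ and $x^\Gamma\partial_v\in\mathcal{B}$. For an integer $i\ge-1$, let $r_i\in\{1,\dots,n-1\}$ with $i\equiv r_i\pmod{n-1}$ and $h_i=\lfloor (i-1)/(n-1)\rfloor+1$. For a nonzero integer $c$ and $x^\Lambda\partial_k\in\mathcal{B}$ define $\mathrm{WD}(c\,x^\Lambda\partial_k)=\mathrm{wt}(\Lambda)-\deg(x^\Lambda)+n-k$ and $\mathrm{lev}_i(c\,x^\Lambda\partial_k)=h_i\,\mathrm{WD}(x^\Lambda\partial_k)+\deg(x^\Lambda)-1$. *)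

theory Defs
  imports Main
begin

text \<open>A partition is a finitely supported sequence indexed by j \<ge> 1; we represent it
  as a function nat \<Rightarrow> nat whose value at 0 is 0 (index 0 is unused).
  A basis element x^Lambda d_k is represented by the pair (Lambda, k).\<close>

type_synonym partition = "nat \<Rightarrow> nat"
type_synonym basis_elt = "partition \<times> nat"

definition Part :: "nat \<Rightarrow> partition set" where
  "Part k = {L. \<forall>j. (j = 0 \<or> k < j) \<longrightarrow> L j = 0}"

definition basis :: "nat \<Rightarrow> basis_elt set" where
  "basis n = {(L, k). 1 \<le> k \<and> k \<le> n \<and> L \<in> Part (k - 1)}"

definition wt :: "partition \<Rightarrow> nat" where
  "wt L = (\<Sum>j\<in>{j. L j \<noteq> 0}. j * L j)"

definition deg :: "partition \<Rightarrow> nat" where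
  "deg L = (\<Sum>j\<in>{j. L j \<noteq> 0}. L j)"

text \<open>The bracket of two basis elements, returned as (c, x^Gamma d_v); it is zero iff c = 0.
  d_j(x^Lambda) = lambda_j x^(Lambda - e_j).\<close>

definition bracket :: "basis_elt \<Rightarrow> basis_elt \<Rightarrow> int \<times> basis_elt" where
  "bracket a b = (case a of (L, k) \<Rightarrow> case b of (T, j) \<Rightarrow>
     if j < k then (int (L j), (\<lambda>t. (L(j := L j - 1)) t + T t, k))
     else if k < j then (- int (T k), (\<lambda>t. L t + (T(k := T k - 1)) t, j))
     else (0, (\<lambda>_. 0, k)))"

definition WD :: "nat \<Rightarrow> basis_elt \<Rightarrow> int" where
  "WD n a = (case a of (L, k) \<Rightarrow> int (wt L) - int (deg L) + int n - int k)"

definition hh :: "nat \<Rightarrow> int \<Rightarrow> int" where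
  "hh n i = (i - 1) div (int n - 1) + 1"

definition lev :: "nat \<Rightarrow> int \<Rightarrow> basis_elt \<Rightarrow> int" where
  "lev n i a = hh n i * WD n a + int (deg (fst a)) - 1"

definition d1 :: basis_elt where
  "d1 = ((\<lambda>_. 0), 1)"

end

theory Submission
  imports Defs
begin

text \<open>The bracket of x^Lambda d_k and x^Theta d_u multiplies the two monomials and removes
  one variable x_v, where v is the smaller of k and u and the result carries the larger index.
  Hence the weight drops by v and the degree by 1, so WD is additive up to n - 1, and lev,
  being affine in WD and deg, is additive up to h_i (n - 1).
  For the inequality: since i <= h_i (n - 1), the bound lev_i <= i together with WD >= n - 1
  forces degree at most 1, and a monomial of degree at most 1 in x_1, ..., x_(k-1) has
  WD <= n - 1, with equality only for d_1. So both factors have WD <= n - 1, and additivity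
  gives the bound together with its equality case.\<close>

lemma sum_support_eq_superset:
  assumes "finite A" "{j. L j \<noteq> 0} \<subseteq> A"
  shows "(\<Sum>j\<in>{j. L j \<noteq> 0}. f j * L j) = (\<Sum>j\<in>A. f j * (L j :: nat))"
  by (rule sum.mono_neutral_left) (use assms in auto)

lemma sum_support_add:
  fixes f :: "nat \<Rightarrow> nat"
  assumes "finite {j. L j \<noteq> 0}" "finite {j. T j \<noteq> 0}"
  shows "(\<Sum>j\<in>{j. L j + T j \<noteq> 0}. f j * (L j + T j))
       = (\<Sum>j\<in>{j. L j \<noteq> 0}. f j * L j) + (\<Sum>j\<in>{j. T j \<noteq> 0}. f j * T j)"
proof -
  define A where "A = {j. L j \<noteq> 0} \<union> {j. T j \<noteq> 0}"
  have A: "finite A" using assms unfolding A_def by simp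
  have "(\<Sum>j\<in>{j. L j + T j \<noteq> 0}. f j * (L j + T j)) = (\<Sum>j\<in>A. f j * (L j + T j))"
    using sum_support_eq_superset[OF A, of "\<lambda>j. L j + T j"] unfolding A_def by auto
  also have "\<dots> = (\<Sum>j\<in>A. f j * L j) + (\<Sum>j\<in>A. f j * T j)"
    by (simp add: distrib_left sum.distrib)
  also have "\<dots> = (\<Sum>j\<in>{j. L j \<noteq> 0}. f j * L j) + (\<Sum>j\<in>{j. T j \<noteq> 0}. f j * T j)"
    using sum_support_eq_superset[OF A] unfolding A_def by auto
  finally show ?thesis .
qed

lemma sum_support_remove_one:
  fixes f :: "nat \<Rightarrow> nat"
  assumes fin: "finite {t. L t \<noteq> 0}" and pos: "0 < L j"
  shows "(\<Sum>t\<in>{t. (L(j := L j - 1)) t \<noteq> 0}. f t * (L(j := L j - 1)) t) + f j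
       = (\<Sum>t\<in>{t. L t \<noteq> 0}. f t * L t)"
proof -
  define A where "A = {t. L t \<noteq> 0}"
  have j: "j \<in> A" using pos unfolding A_def by simp
  have "(\<Sum>t\<in>{t. (L(j := L j - 1)) t \<noteq> 0}. f t * (L(j := L j - 1)) t)
      = (\<Sum>t\<in>A. f t * (L(j := L j - 1)) t)"
    unfolding A_def by (rule sum_support_eq_superset[OF fin]) auto
  also have "\<dots> = f j * (L j - 1) + (\<Sum>t\<in>A - {j}. f t * L t)"
    using fin j unfolding A_def by (simp add: sum.remove)
  finally show ?thesis
    using pos fin j sum.remove[of A j "\<lambda>t. f t * L t"] unfolding A_def
    by (cases "L j") auto
qed

lemma wt_add:
  "finite {j. L j \<noteq> 0} \<Longrightarrow> finite {j. T j \<noteq> 0} \<Longrightarrow> wt (\<lambda>j. L j + T j) = wt L + wt T"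
  unfolding wt_def by (rule sum_support_add)

lemma deg_add:
  "finite {j. L j \<noteq> 0} \<Longrightarrow> finite {j. T j \<noteq> 0} \<Longrightarrow> deg (\<lambda>j. L j + T j) = deg L + deg T"
  unfolding deg_def using sum_support_add[of L T "\<lambda>_. 1"] by simp

lemma wt_remove_one:
  "finite {t. L t \<noteq> 0} \<Longrightarrow> 0 < L j \<Longrightarrow> wt (L(j := L j - 1)) + j = wt L"
  unfolding wt_def by (rule sum_support_remove_one)

lemma deg_remove_one:
  "finite {t. L t \<noteq> 0} \<Longrightarrow> 0 < L j \<Longrightarrow> deg (L(j := L j - 1)) + 1 = deg L"
  unfolding deg_def using sum_support_remove_one[of L j "\<lambda>_. 1"] by simp

lemma finite_support_Part: "L \<in> Part m \<Longrightarrow> finite {j. L j \<noteq> 0}"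
  unfolding Part_def by (rule finite_subset[of _ "{..m}"]) (auto simp: not_less[symmetric])

lemma wt_deg_bracket_monomial:
  assumes "finite {t. L t \<noteq> 0}" "finite {t. T t \<noteq> 0}" "0 < L j"
  shows "int (wt (\<lambda>t. (L(j := L j - 1)) t + T t)) = int (wt L) + int (wt T) - int j"
    and "int (deg (\<lambda>t. (L(j := L j - 1)) t + T t)) = int (deg L) + int (deg T) - 1"
proof -
  have fin: "finite {t. (L(j := L j - 1)) t \<noteq> 0}"
    by (rule finite_subset[OF _ assms(1)]) auto
  have "wt (\<lambda>t. (L(j := L j - 1)) t + T t) = wt (L(j := L j - 1)) + wt T"
    by (rule wt_add[OF fin assms(2)])
  with wt_remove_one[OF assms(1,3)]
  show "int (wt (\<lambda>t. (L(j := L j - 1)) t + T t)) = int (wt L) + int (wt T) - int j"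
    by linarith
  have "deg (\<lambda>t. (L(j := L j - 1)) t + T t) = deg (L(j := L j - 1)) + deg T"
    by (rule deg_add[OF fin assms(2)])
  with deg_remove_one[OF assms(1,3)]
  show "int (deg (\<lambda>t. (L(j := L j - 1)) t + T t)) = int (deg L) + int (deg T) - 1"
    by linarith
qed

lemma WD_deg_bracket:
  assumes a: "a \<in> basis n" and b: "b \<in> basis n" and nz: "fst (bracket a b) \<noteq> 0"
  shows "WD n (snd (bracket a b)) = WD n a + WD n b - (int n - 1)"
    and "int (deg (fst (snd (bracket a b)))) = int (deg (fst a)) + int (deg (fst b)) - 1"
proof -
  obtain L k T j where ab: "a = (L, k)" "b = (T, j)" by (cases a, cases b)
  have fin: "finite {t. L t \<noteq> 0}" "finite {t. T t \<noteq> 0}"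
    using a b finite_support_Part unfolding ab basis_def by auto
  have "j < k \<or> k < j" using nz unfolding ab bracket_def by (auto split: if_splits)
  then have "WD n (snd (bracket a b)) = WD n a + WD n b - (int n - 1)
     \<and> int (deg (fst (snd (bracket a b)))) = int (deg (fst a)) + int (deg (fst b)) - 1"
  proof
    assume jk: "j < k"
    then have "0 < L j" using nz unfolding ab bracket_def by auto
    with jk show ?thesis
      using wt_deg_bracket_monomial[OF fin] unfolding ab bracket_def WD_def by auto
  next
    assume kj: "k < j"
    then have "0 < T k" using nz unfolding ab bracket_def by auto
    moreover have "(\<lambda>t. L t + (T(k := T k - 1)) t) = (\<lambda>t. (T(k := T k - 1)) t + L t)"
      by (simp add: add.commute)
    ultimately show ?thesis
      using kj wt_deg_bracket_monomial[OF fin(2,1)] unfolding ab bracket_def WD_def by auto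
  qed
  then show "WD n (snd (bracket a b)) = WD n a + WD n b - (int n - 1)"
    and "int (deg (fst (snd (bracket a b)))) = int (deg (fst a)) + int (deg (fst b)) - 1"
    by auto
qed

lemma lev_bracket:
  assumes "a \<in> basis n" "b \<in> basis n" "fst (bracket a b) \<noteq> 0"
  shows "lev n i (snd (bracket a b)) = lev n i a + lev n i b - hh n i * (int n - 1)"
  unfolding lev_def WD_deg_bracket[OF assms] by (simp add: algebra_simps)

lemma hh_nonneg:
  assumes "3 \<le> n" "-1 \<le> i"
  shows "0 \<le> hh n i"
proof -
  have "-1 = (- 1 * (int n - 1)) div (int n - 1)"
    using assms by (intro nonzero_mult_div_cancel_right[symmetric]) simp
  also have "\<dots> \<le> (i - 1) div (int n - 1)" using assms by (intro zdiv_mono1) auto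
  finally show ?thesis unfolding hh_def by simp
qed

lemma le_hh_mult:
  assumes "2 \<le> n"
  shows "i \<le> hh n i * (int n - 1)"
proof -
  define m where "m = int n - 1"
  have "hh n i * m = (i - 1) div m * m + m" unfolding hh_def m_def by (simp add: algebra_simps)
  also have "\<dots> = i - 1 - (i - 1) mod m + m" by (simp add: minus_mod_eq_div_mult)
  finally show ?thesis
    using pos_mod_bound[of m "i - 1"] assms unfolding m_def by linarith
qed

lemma wt_le_mult_deg:
  assumes "L \<in> Part m"
  shows "wt L \<le> m * deg L"
  unfolding wt_def deg_def sum_distrib_left
proof (rule sum_mono)
  fix j assume "j \<in> {j. L j \<noteq> 0}"
  then have "j \<le> m" using assms unfolding Part_def by (auto simp: not_less[symmetric])
  then show "j * L j \<le> m * L j" by simp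
qed

lemma WD_d1: "WD n d1 = int n - 1"
  unfolding d1_def WD_def wt_def deg_def by simp

lemma WD_le_of_deg_le_1:
  assumes a: "a \<in> basis n" and d: "deg (fst a) \<le> 1"
  shows "WD n a \<le> int n - 1" and "WD n a = int n - 1 \<longleftrightarrow> a = d1"
proof -
  obtain L k where ak: "a = (L, k)" by (cases a)
  have k: "1 \<le> k" "k \<le> n" and P: "L \<in> Part (k - 1)" using a unfolding ak basis_def by auto
  have "WD n a \<le> int n - 1 \<and> (WD n a = int n - 1 \<longleftrightarrow> a = d1)"
  proof (cases "k = 1")
    case True
    then have "L = (\<lambda>_. 0)" using P unfolding Part_def by auto
    then show ?thesis using True WD_d1 unfolding ak d1_def by auto
  next
    case False
    have "wt L \<le> (k - 1) * deg L" using wt_le_mult_deg[OF P] .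
    then have "int (wt L) - int (deg L) \<le> int k - 2"
      using d False k unfolding ak by (cases "deg L") auto
    then have "WD n a \<le> int n - 2" unfolding ak WD_def by simp
    moreover have "a \<noteq> d1" using False unfolding ak d1_def by auto
    ultimately show ?thesis by auto
  qed
  then show "WD n a \<le> int n - 1" and "WD n a = int n - 1 \<longleftrightarrow> a = d1" by auto
qed

lemma WD_le_of_lev_le:
  assumes n: "3 \<le> n" and a: "a \<in> basis n" and i: "-1 \<le> i" and lev: "lev n i a \<le> i"
  shows "WD n a \<le> int n - 1" and "WD n a = int n - 1 \<longleftrightarrow> a = d1"
proof -
  have "WD n a \<le> int n - 1 \<and> (WD n a = int n - 1 \<longleftrightarrow> a = d1)"
  proof (cases "WD n a < int n - 1")
    case True
    then show ?thesis using WD_d1 by auto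
  next
    case False
    have "hh n i * (int n - 1) \<le> hh n i * WD n a"
      using False hh_nonneg[OF n i] by (intro mult_left_mono) auto
    moreover have "i \<le> hh n i * (int n - 1)" using n by (intro le_hh_mult) simp
    ultimately have "deg (fst a) \<le> 1" using lev unfolding lev_def by linarith
    then show ?thesis using WD_le_of_deg_le_1[OF a] by auto
  qed
  then show "WD n a \<le> int n - 1" and "WD n a = int n - 1 \<longleftrightarrow> a = d1" by auto
qed

theorem proposition2p3:
  fixes n :: nat and a b :: basis_elt
  assumes "3 \<le> n"
    and "a \<in> basis n" and "b \<in> basis n"
    and "fst (bracket a b) \<noteq> 0"
  shows "(\<forall>i::int. -1 \<le> i \<longrightarrow>
            lev n i (snd (bracket a b)) = lev n i a + lev n i b - hh n i * (int n - 1))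
       \<and> WD n (snd (bracket a b)) = WD n a + WD n b - (int n - 1)
       \<and> (\<forall>i j::int. -1 \<le> i \<longrightarrow> -1 \<le> j \<longrightarrow> lev n i a \<le> i \<longrightarrow> lev n j b \<le> j \<longrightarrow>
            WD n (snd (bracket a b)) \<le> min (WD n a) (WD n b)
            \<and> (WD n (snd (bracket a b)) = min (WD n a) (WD n b) \<longleftrightarrow> (a = d1 \<or> b = d1)))"
proof (intro conjI allI impI)
  note WD_sum = WD_deg_bracket(1)[OF assms(2-4)]
  show "WD n (snd (bracket a b)) = WD n a + WD n b - (int n - 1)" by (rule WD_sum)
  show "lev n i (snd (bracket a b)) = lev n i a + lev n i b - hh n i * (int n - 1)" for i
    by (rule lev_bracket[OF assms(2-4)])
  fix i j :: int
  assume "-1 \<le> i" "-1 \<le> j" "lev n i a \<le> i" "lev n j b \<le> j"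
  note Wa = WD_le_of_lev_le[OF assms(1,2) \<open>-1 \<le> i\<close> \<open>lev n i a \<le> i\<close>]
    and Wb = WD_le_of_lev_le[OF assms(1,3) \<open>-1 \<le> j\<close> \<open>lev n j b \<le> j\<close>]
  show "WD n (snd (bracket a b)) \<le> min (WD n a) (WD n b)" using WD_sum Wa Wb by auto
  show "WD n (snd (bracket a b)) = min (WD n a) (WD n b) \<longleftrightarrow> (a = d1 \<or> b = d1)"
    using WD_sum Wa Wb by auto
qed

end
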